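(* Let $R$ be a commutative ring with identity, $\mathcal S$ an associative $R$-algebra with identity, $\mathcal M$ a $2$-torsion free bimodule over $\mathcal S$, $\delta$ a derivation on $\mathcal S$ and $f:\mathcal S\to\mathcal M$ a bimodule homomorphism over $\mathcal S$. If $D:\mathcal S\to\mathcal M$ is a Jordan $(\delta,f)$-derivation on $\mathcal M$, then $(D(xy)-D(x)y-f(x)\delta(y))(xy-yx)=0$ for all $x,y\in\mathcal S$.
   Context: A derivation on $\mathcal S$ is an additive map $\delta$ with $\delta(ab)=\delta(a)b+a\delta(b)$. An additive map $D:\mathcal S\to\mathcal M$ is a Jordan $(\delta,f)$-derivation if $D(x^2)=D(x)x+f(x)\delta(x)$ for all $x\in\mathcal S$. $\mathcal M$ is $2$-torsion free if $2m=0$ implies $m=0$. *)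

theory Defs
  imports Main
begin

text \<open>An associative unital R-algebra: the ring structure of S comes from the type class
  ring_1 (associative, unital, not necessarily commutative); sc is the R-scalar action.\<close>
definition algebra_over ::
  "('r::comm_ring_1 \<Rightarrow> 'a::ring_1 \<Rightarrow> 'a) \<Rightarrow> bool" where
  "algebra_over sc \<longleftrightarrow>
     (\<forall>r a b. sc r (a + b) = sc r a + sc r b) \<and>
     (\<forall>r s a. sc (r + s) a = sc r a + sc s a) \<and>
     (\<forall>r s a. sc (r * s) a = sc r (sc s a)) \<and>
     (\<forall>a. sc 1 a = a) \<and>
     (\<forall>r a b. sc r (a * b) = sc r a * b) \<and>
     (\<forall>r a b. sc r (a * b) = a * sc r b)"

definition bimodule ::
  "('a::ring_1 \<Rightarrow> 'm::ab_group_add \<Rightarrow> 'm) \<Rightarrow> ('m \<Rightarrow> 'a \<Rightarrow> 'm) \<Rightarrow> bool" where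
  "bimodule lm rm \<longleftrightarrow>
     (\<forall>a m n. lm a (m + n) = lm a m + lm a n) \<and>
     (\<forall>a b m. lm (a + b) m = lm a m + lm b m) \<and>
     (\<forall>a b m. lm (a * b) m = lm a (lm b m)) \<and>
     (\<forall>m. lm 1 m = m) \<and>
     (\<forall>a m n. rm (m + n) a = rm m a + rm n a) \<and>
     (\<forall>a b m. rm m (a + b) = rm m a + rm m b) \<and>
     (\<forall>a b m. rm m (a * b) = rm (rm m a) b) \<and>
     (\<forall>m. rm m 1 = m) \<and>
     (\<forall>a b m. rm (lm a m) b = lm a (rm m b))"

definition two_torsion_free :: "'m::ab_group_add itself \<Rightarrow> bool" where
  "two_torsion_free _ \<longleftrightarrow> (\<forall>m::'m. m + m = 0 \<longrightarrow> m = 0)"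

definition additive :: "('a::plus \<Rightarrow> 'b::plus) \<Rightarrow> bool" where
  "additive g \<longleftrightarrow> (\<forall>x y. g (x + y) = g x + g y)"

definition derivation :: "('a::ring_1 \<Rightarrow> 'a) \<Rightarrow> bool" where
  "derivation d \<longleftrightarrow> additive d \<and> (\<forall>a b. d (a * b) = d a * b + a * d b)"

definition bimodule_hom ::
  "('a::ring_1 \<Rightarrow> 'm::ab_group_add \<Rightarrow> 'm) \<Rightarrow> ('m \<Rightarrow> 'a \<Rightarrow> 'm) \<Rightarrow> ('a \<Rightarrow> 'm) \<Rightarrow> bool" where
  "bimodule_hom lm rm f \<longleftrightarrow> additive f \<and>
     (\<forall>a x. f (a * x) = lm a (f x)) \<and> (\<forall>a x. f (x * a) = rm (f x) a)"

definition jordan_delta_f_derivation ::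
  "('m::ab_group_add \<Rightarrow> 'a::ring_1 \<Rightarrow> 'm) \<Rightarrow> ('a \<Rightarrow> 'm) \<Rightarrow> ('a \<Rightarrow> 'a) \<Rightarrow> ('a \<Rightarrow> 'm) \<Rightarrow> bool" where
  "jordan_delta_f_derivation rm D d f \<longleftrightarrow> additive D \<and>
     (\<forall>x. D (x * x) = rm (D x) x + rm (f x) (d x))"

end

theory Submission
  imports Defs "HOL.Modules"
begin

text \<open>Linearizing the Jordan identity gives D on Jordan products a b + b a. As
  2 a b a = a (a b + b a) + (a b + b a) a - (a a b + b a a), linearizing once more and cancelling
  the factor 2 gives D on a b a. Evaluating D on x (y x y) + (y x y) x = (x y)^2 + (y x)^2 once by
  the Jordan product formula and once by the Jordan identity for x y and y x, everything cancels
  except the defect D(x y) - D(x) y - f(x) \<delta>(y), which is antisymmetric in x and y and so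
  survives multiplied by x y - y x.\<close>

locale right_module_jordan_derivation =
  fixes rm :: "'m::ab_group_add \<Rightarrow> 'a::ring_1 \<Rightarrow> 'm"
    and d :: "'a \<Rightarrow> 'a"
    and f D :: "'a \<Rightarrow> 'm"
  assumes rm_add_left: "rm (m + n) a = rm m a + rm n a"
    and rm_add_right: "rm m (a + b) = rm m a + rm m b"
    and rm_mult: "rm (rm m a) b = rm m (a * b)"
    and d_add: "d (a + b) = d a + d b"
    and d_mult: "d (a * b) = d a * b + a * d b"
    and f_add: "f (a + b) = f a + f b"
    and f_mult: "f (a * b) = rm (f a) b"
    and D_add: "D (a + b) = D a + D b"
    and D_square: "D (a * a) = rm (D a) a + rm (f a) (d a)"
begin

sublocale additive_d: additive d
  by unfold_locales (rule d_add)

sublocale additive_f: additive f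
  by unfold_locales (rule f_add)

sublocale additive_D: additive D
  by unfold_locales (rule D_add)

lemma additive_rm_left: "additive (\<lambda>m. rm m a)"
  by unfold_locales (rule rm_add_left)

lemma additive_rm_right: "additive (rm m)"
  by unfold_locales (rule rm_add_right)

lemmas rm_diff_left = additive.diff[OF additive_rm_left]
  and rm_diff_right = additive.diff[OF additive_rm_right]

lemmas expand_simps = rm_add_left rm_add_right rm_diff_left rm_diff_right rm_mult
  d_add d_mult additive_d.diff f_add f_mult additive_f.diff D_add additive_D.diff
  distrib_left distrib_right mult.assoc

lemma D_jordan_product:
  "D (a * b + b * a) = rm (D a) b + rm (D b) a + rm (f a) (d b) + rm (f b) (d a)"
proof -
  have "D ((a + b) * (a + b)) = rm (D (a + b)) (a + b) + rm (f (a + b)) (d (a + b))"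
    by (rule D_square)
  then have "D (a * a) + D (a * b + b * a) + D (b * b) =
      rm (D a) a + rm (D a) b + rm (D b) a + rm (D b) b
      + rm (f a) (d a) + rm (f a) (d b) + rm (f b) (d a) + rm (f b) (d b)"
    by (simp add: expand_simps algebra_simps)
  then show ?thesis
    by (simp add: D_square algebra_simps)
qed

lemma D_triple_product:
  assumes "two_torsion_free TYPE('m)"
  shows "D (a * b * a) = rm (D a) (b * a) + rm (f a) (d b * a) + rm (f a) (b * d a)"
proof -
  let ?rhs = "rm (D a) (b * a) + rm (f a) (d b * a) + rm (f a) (b * d a)"
  have twice_aba: "a * b * a + a * b * a =
      a * (a * b + b * a) + (a * b + b * a) * a - ((a * a) * b + b * (a * a))"
    by (simp add: algebra_simps)
  have "D (a * b * a) + D (a * b * a) =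
      D (a * (a * b + b * a) + (a * b + b * a) * a) - D ((a * a) * b + b * (a * a))"
    unfolding additive_D.add[symmetric] twice_aba by (rule additive_D.diff)
  also have "\<dots> = ?rhs + ?rhs"
    unfolding D_jordan_product D_square by (simp add: expand_simps algebra_simps)
  finally have "(D (a * b * a) - ?rhs) + (D (a * b * a) - ?rhs) = 0"
    by (simp add: algebra_simps)
  then have "D (a * b * a) - ?rhs = 0"
    using assms unfolding two_torsion_free_def by blast
  then show ?thesis
    by simp
qed

definition defect :: "'a \<Rightarrow> 'a \<Rightarrow> 'm" where
  "defect x y = D (x * y) - rm (D x) y - rm (f x) (d y)"

lemma defect_swap: "defect y x = - defect x y"
  using D_jordan_product[of x y] unfolding defect_def additive_D.add
  by (simp add: algebra_simps)

theorem defect_times_commutator: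
  assumes "two_torsion_free TYPE('m)"
  shows "rm (defect x y) (x * y - y * x) = 0"
proof -
  have Dxy: "D (x * y) = rm (D x) y + rm (f x) (d y) + defect x y"
    by (simp add: defect_def)
  have Dyx: "D (y * x) = rm (D y) x + rm (f y) (d x) - defect x y"
    using defect_swap[of x y] by (simp add: defect_def)
  have "D (x * (y * x * y) + (y * x * y) * x) = D ((x * y) * (x * y)) + D ((y * x) * (y * x))"
    unfolding additive_D.add[symmetric] by (simp add: algebra_simps)
  then have "rm (D x) (y * x * y) + rm (D (y * x * y)) x
        + rm (f x) (d (y * x * y)) + rm (f (y * x * y)) (d x) =
      (rm (D (x * y)) (x * y) + rm (f (x * y)) (d (x * y)))
        + (rm (D (y * x)) (y * x) + rm (f (y * x)) (d (y * x)))"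
    unfolding D_jordan_product D_square .
  then show ?thesis
    unfolding D_triple_product[OF assms] Dxy Dyx
    by (simp add: expand_simps algebra_simps)
qed

end

theorem lemma3p7:
  fixes sc :: "'r::comm_ring_1 \<Rightarrow> 'a::ring_1 \<Rightarrow> 'a"
    and lm :: "'a \<Rightarrow> 'm::ab_group_add \<Rightarrow> 'm"
    and rm :: "'m \<Rightarrow> 'a \<Rightarrow> 'm"
    and d :: "'a \<Rightarrow> 'a"
    and f D :: "'a \<Rightarrow> 'm"
  assumes "algebra_over sc"
    and "bimodule lm rm"
    and "two_torsion_free TYPE('m)"
    and "derivation d"
    and "bimodule_hom lm rm f"
    and "jordan_delta_f_derivation rm D d f"
  shows "\<forall>x y. rm (D (x * y) - rm (D x) y - rm (f x) (d y)) (x * y - y * x) = 0"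
proof -
  interpret right_module_jordan_derivation rm d f D
    using assms(2,4-6)
    by unfold_locales
      (auto simp: bimodule_def derivation_def bimodule_hom_def jordan_delta_f_derivation_def
        Defs.additive_def)
  show ?thesis
    using defect_times_commutator[OF assms(3)] by (simp add: defect_def)
qed

end
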